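(* Let $t\ge1$ be a power of two and $0\le k\le t$. Then $\mathrm{val}(\mathcal{F}[t,k])\le \dfrac{k^2\log(2t)}{t}$ (logarithm base 2).
   Context: An interval is a nonempty set $\{a,\ldots,b\}$ of integers; a $[t,k]$-interval system is a set of $k$ pairwise disjoint intervals in $[t]$. $\mathrm{val}(F)=\sum_{I\in F}1/|I|$ and for a distribution $\mathcal{F}$ over interval systems $\mathrm{val}(\mathcal{F})=\mathbb{E}_{F\sim\mathcal{F}}\mathrm{val}(F)$. For an interval $[a,b]$ and integer $c$, $[a,b]+c=[a+c,b+c]$, and $F+c=\{I+c:I\in F\}$. $\mathcal{F}[t,k]$ is the output distribution of the recursive randomized procedure $\mathrm{Sample}(t,k)$ ($0\le k\le t$): if $k=0$ return $\emptyset$; if $k=1$ return $\{[t]\}$; otherwise let $s=\lceil t/2\rceil$, sample $j\in\{0,\ldots,k\}$ with probability $\binom{s}{j}\binom{t-s}{k-j}/\binom{t}{k}$, compute $F_1=\mathrm{Sample}(s,j)$ and $F_2=\mathrm{Sample}(t-s,k-j)$ independently, and return $F_1\cup(F_2+s)$. *)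

theory Defs
  imports "HOL-Probability.Probability"
begin

text \<open>Intervals are nonempty sets {a..b} of integers; we work inside [t] = {1..t},
  so natural numbers suffice. An interval system is a set of intervals,
  a distribution over interval systems is a pmf.\<close>

definition is_interval :: "nat set \<Rightarrow> bool" where
  "is_interval I \<longleftrightarrow> (\<exists>a b. a \<le> b \<and> I = {a..b})"

definition is_interval_system :: "nat \<Rightarrow> nat \<Rightarrow> nat set set \<Rightarrow> bool" where
  "is_interval_system t k F \<longleftrightarrow> finite F \<and> card F = k \<and>
     (\<forall>I\<in>F. is_interval I \<and> I \<subseteq> {1..t}) \<and>
     (\<forall>I\<in>F. \<forall>J\<in>F. I \<noteq> J \<longrightarrow> I \<inter> J = {})"

definition val :: "nat set set \<Rightarrow> real" where
  "val F = (\<Sum>I\<in>F. 1 / real (card I))"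

definition val_dist :: "nat set set pmf \<Rightarrow> real" where
  "val_dist D = measure_pmf.expectation D val"

definition shift_sys :: "nat set set \<Rightarrow> nat \<Rightarrow> nat set set" where
  "shift_sys F c = (\<lambda>I. (\<lambda>x. x + c) ` I) ` F"

definition split_pmf :: "nat \<Rightarrow> nat \<Rightarrow> nat pmf" where
  "split_pmf t k = embed_pmf (\<lambda>j. if j \<le> k then
      real ((((t + 1) div 2) choose j) * ((t - (t + 1) div 2) choose (k - j))) / real (t choose k)
      else 0)"

text \<open>Sample(t,k); the branch for k > t (outside the procedure's domain 0 \<le> k \<le> t)
  is an arbitrary dummy value ensuring termination.\<close>
function sample :: "nat \<Rightarrow> nat \<Rightarrow> nat set set pmf" where
  "sample t k =
     (if k = 0 then return_pmf {}
      else if k = 1 then return_pmf {{1..t}}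
      else if t < k then return_pmf {}
      else do {
        j \<leftarrow> split_pmf t k;
        F1 \<leftarrow> sample ((t + 1) div 2) j;
        F2 \<leftarrow> sample (t - (t + 1) div 2) (k - j);
        return_pmf (F1 \<union> shift_sys F2 ((t + 1) div 2))
      })"
  by auto
termination
  by (relation "Wellfounded.measure fst") auto

end

theory Submission
  imports Defs
begin

text \<open>Let \<open>t = 2q\<close> with \<open>q = 2^m\<close>. As \<open>val\<close> is subadditive and shift invariant, the value of
  \<open>F[2q,k]\<close> is at most the expectation, over the hypergeometric split \<open>j\<close>, of the values of
  \<open>F[q,j]\<close> and \<open>F[q,k-j]\<close>. The potential \<open>(k(k-1) m + k) / 2^m\<close> survives this recursion:
  by the second factorial moment of the hypergeometric distribution,
  \<open>E[j(j-1) + (k-j)(k-j-1)] = k(k-1)(q-1)/(2q-1) \<le> k(k-1)/2\<close>, and \<open>k \<le> k(k-1)\<close> for \<open>k \<ge> 2\<close>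
  absorbs the linear term. Finally \<open>k(k-1) m + k \<le> k\<^sup>2 (m+1) = k\<^sup>2 log\<^sub>2 (2t)\<close>.\<close>

lemma mult_pred_mult_choose:
  fixes a j :: nat
  assumes "2 \<le> j"
  shows "j * (j - 1) * (a choose j) = a * (a - 1) * ((a - 2) choose (j - 2))"
proof (cases "a < 2")
  case True
  then show ?thesis
    using assms by (auto simp: less_2_cases_iff)
next
  case False
  then obtain a' where a: "a = Suc (Suc a')"
    by (metis add_2_eq_Suc le_Suc_ex not_less)
  obtain j' where j: "j = Suc (Suc j')"
    using assms by (metis add_2_eq_Suc le_Suc_ex)
  have "j * (j - 1) * (a choose j) = Suc (Suc j') * Suc j' * (Suc (Suc a') choose Suc (Suc j'))"
    by (simp del: binomial_Suc_Suc add: a j)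
  also have "\<dots> = Suc (Suc a') * Suc a' * (a' choose j')"
    using Suc_times_binomial_eq[of "Suc a'" "Suc j'"] Suc_times_binomial_eq[of a' j']
    by (metis mult.assoc mult.commute)
  also have "\<dots> = a * (a - 1) * ((a - 2) choose (j - 2))"
    by (simp del: binomial_Suc_Suc add: a j)
  finally show ?thesis .
qed

lemma vandermonde_factorial_moment2:
  fixes a b k :: nat
  assumes "2 \<le> k"
  shows "(\<Sum>j\<le>k. j * (j - 1) * ((a choose j) * (b choose (k - j))))
           = a * (a - 1) * ((a + b - 2) choose (k - 2))"
proof -
  obtain k' where k: "k = Suc (Suc k')"
    using assms by (metis add_2_eq_Suc le_Suc_ex)
  have "(\<Sum>j\<le>k. j * (j - 1) * ((a choose j) * (b choose (k - j)))) =
        (\<Sum>i\<le>k'. Suc (Suc i) * Suc i * ((a choose Suc (Suc i)) * (b choose (k' - i))))"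
    by (simp only: k sum.atMost_Suc_shift) simp
  also have "\<dots> = (\<Sum>i\<le>k'. a * (a - 1) * (((a - 2) choose i) * (b choose (k' - i))))"
  proof (rule sum.cong[OF refl])
    fix i
    show "Suc (Suc i) * Suc i * ((a choose Suc (Suc i)) * (b choose (k' - i)))
            = a * (a - 1) * (((a - 2) choose i) * (b choose (k' - i)))"
      using mult_pred_mult_choose[of "Suc (Suc i)" a]
      by (simp del: binomial_Suc_Suc add: mult.assoc[symmetric])
  qed
  also have "\<dots> = a * (a - 1) * ((a - 2 + b) choose k')"
    by (simp add: sum_distrib_left[symmetric] vandermonde)
  also have "\<dots> = a * (a - 1) * ((a + b - 2) choose (k - 2))"
    by (cases "a < 2") (auto simp: k less_2_cases_iff)
  finally show ?thesis .
qed

lemma vandermonde_factorial_moment2':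
  fixes a b k :: nat
  assumes "2 \<le> k"
  shows "(\<Sum>j\<le>k. (k - j) * (k - j - 1) * ((a choose j) * (b choose (k - j))))
           = b * (b - 1) * ((a + b - 2) choose (k - 2))"
proof -
  have "(\<Sum>j\<le>k. (k - j) * (k - j - 1) * ((a choose j) * (b choose (k - j))))
          = (\<Sum>j\<le>k. j * (j - 1) * ((b choose j) * (a choose (k - j))))"
    by (rule sum.reindex_bij_witness[of _ "\<lambda>j. k - j" "\<lambda>j. k - j"]) auto
  also have "\<dots> = b * (b - 1) * ((b + a - 2) choose (k - 2))"
    by (rule vandermonde_factorial_moment2[OF assms])
  finally show ?thesis
    by (simp add: add.commute)
qed

lemma val_nonneg: "0 \<le> val F"
  unfolding val_def by (rule sum_nonneg) auto

lemma val_shift_sys [simp]: "val (shift_sys F c) = val F"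
proof -
  have inj: "inj (\<lambda>I::nat set. (\<lambda>x. x + c) ` I)"
    by (rule injI) (simp add: inj_image_eq_iff inj_def)
  show ?thesis
    unfolding val_def shift_sys_def
    by (subst sum.reindex) (auto intro: inj_on_subset[OF inj] sum.cong simp: card_image)
qed

lemma val_Un_le: "val (A \<union> B) \<le> val A + val B"
proof (cases "finite A \<and> finite B")
  case True
  then show ?thesis
    unfolding val_def by (simp add: sum_Un sum_nonneg)
next
  case False
  then show ?thesis
    using val_nonneg[of A] val_nonneg[of B] unfolding val_def by auto
qed

lemma nn_integral_val_Un_shift_le:
  "(\<integral>\<^sup>+F1. \<integral>\<^sup>+F2. ennreal (val (F1 \<union> shift_sys F2 c)) \<partial>measure_pmf N \<partial>measure_pmf M)
     \<le> (\<integral>\<^sup>+F. ennreal (val F) \<partial>M) + (\<integral>\<^sup>+F. ennreal (val F) \<partial>N)"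
proof -
  have "(\<integral>\<^sup>+F1. \<integral>\<^sup>+F2. ennreal (val (F1 \<union> shift_sys F2 c)) \<partial>N \<partial>M)
          \<le> (\<integral>\<^sup>+F1. \<integral>\<^sup>+F2. ennreal (val F1) + ennreal (val F2) \<partial>N \<partial>M)"
    using val_Un_le[of _ "shift_sys _ c"] val_nonneg
    by (intro nn_integral_mono) (simp add: ennreal_plus[symmetric] del: ennreal_plus)
  also have "\<dots> = (\<integral>\<^sup>+F. ennreal (val F) \<partial>M) + (\<integral>\<^sup>+F. ennreal (val F) \<partial>N)"
    by (simp add: nn_integral_add measure_pmf.emeasure_space_1)
  finally show ?thesis .
qed

lemma pmf_split_pmf:
  assumes "k \<le> t"
  shows "pmf (split_pmf t k) j = (if j \<le> k then
           real ((((t + 1) div 2) choose j) * ((t - (t + 1) div 2) choose (k - j))) / real (t choose k)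
           else 0)"
proof -
  define c where "c j = (((t + 1) div 2) choose j) * ((t - (t + 1) div 2) choose (k - j))" for j
  let ?f = "\<lambda>j. if j \<le> k then real (c j) / real (t choose k) else 0"
  have "(\<Sum>j\<le>k. c j) = t choose k"
    unfolding c_def using vandermonde[of "(t + 1) div 2" "t - (t + 1) div 2" k] by simp
  then have "(\<Sum>j\<le>k. ?f j) = 1"
    using assms by (simp add: sum_divide_distrib[symmetric] of_nat_sum[symmetric])
  moreover have "(\<integral>\<^sup>+j. ennreal (?f j) \<partial>count_space UNIV) = ennreal (\<Sum>j\<le>k. ?f j)"
    by (subst nn_integral_count_space'[of "{..k}"]) auto
  ultimately show ?thesis
    unfolding split_pmf_def c_def[symmetric] by (subst pmf_embed_pmf) auto
qed

lemma sample_split: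
  assumes "2 \<le> k" "k \<le> t"
  shows "sample t k = split_pmf t k \<bind> (\<lambda>j. sample ((t + 1) div 2) j \<bind>
          (\<lambda>F1. sample (t - (t + 1) div 2) (k - j) \<bind>
          (\<lambda>F2. return_pmf (F1 \<union> shift_sys F2 ((t + 1) div 2)))))"
  using assms by (subst sample.simps) simp

definition val_bound :: "nat \<Rightarrow> nat \<Rightarrow> real" where
  "val_bound m k = (real (k * (k - 1)) * m + k) / 2 ^ m"

lemma val_bound_nonneg: "0 \<le> val_bound m k"
  unfolding val_bound_def by simp

text \<open>The recursion step cleared of denominators: \<open>x\<close> is the second factorial moment sum
  \<open>\<Sum>j. j(j-1) (q choose j) (q choose k-j)\<close> and \<open>c = 2q choose k\<close>; both are multiples of
  \<open>y = 2q-2 choose k-2\<close>.\<close>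

lemma val_bound_step_cleared:
  fixes q k m x y c :: nat
  assumes k: "2 \<le> k" and x: "x = q * (q - 1) * y" and c: "k * (k - 1) * c = (2 * q) * (2 * q - 1) * y"
  shows "2 * (m * x + m * x + k * c) \<le> (k * (k - 1) * (m + 1) + k) * c"
proof -
  define P where "P = k * (k - 1) * c"
  have "k * 1 \<le> k * (k - 1)"
    using k by (intro mult_le_mono2) linarith
  then have kc: "k * c \<le> P"
    unfolding P_def by (metis mult_le_mono1 mult_1_right)
  have "4 * (q * (q - 1)) \<le> (2 * q) * (2 * q - 1)"
    by (cases q) (auto simp: algebra_simps)
  then have "4 * x \<le> P"
    unfolding x P_def c by (metis mult.assoc mult_le_mono1)
  then have mx: "4 * (m * x) \<le> m * P"
    by (metis mult.left_commute mult_le_mono2)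
  have "2 * (m * x + m * x + k * c) \<le> m * P + P + k * c"
    using kc mx by arith
  also have "\<dots> = (k * (k - 1) * (m + 1) + k) * c"
    unfolding P_def by (simp add: algebra_simps)
  finally show ?thesis .
qed

lemma val_bound_recursion:
  fixes m k :: nat
  defines "q \<equiv> 2 ^ m"
  assumes k: "2 \<le> k" "k \<le> 2 * q"
  shows "(\<Sum>j\<le>k. (val_bound m j + val_bound m (k - j)) *
            (real ((q choose j) * (q choose (k - j))) / real ((2 * q) choose k)))
         \<le> val_bound (Suc m) k"
proof -
  define C where "C = (2 * q) choose k"
  define c where "c j = (q choose j) * (q choose (k - j))" for j
  define N where "N j = m * (j * (j - 1) * c j) + m * ((k - j) * (k - j - 1) * c j) + k * c j" for j
  define y where "y = (q + q - 2) choose (k - 2)"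
  have "q > 0"
    unfolding q_def by simp
  have "C > 0"
    unfolding C_def using k(2) by simp
  have term_eq: "(val_bound m j + val_bound m (k - j)) * (real (c j) / real C)
                   = real (N j) / (real q * real C)" if "j \<le> k" for j
  proof -
    have "real j + real (k - j) = real k"
      using that by simp
    then show ?thesis
      using \<open>C > 0\<close> unfolding val_bound_def N_def q_def by (simp add: field_simps)
  qed
  have "(\<Sum>j\<le>k. N j) = m * (\<Sum>j\<le>k. j * (j - 1) * c j) + m * (\<Sum>j\<le>k. (k - j) * (k - j - 1) * c j)
                        + k * (\<Sum>j\<le>k. c j)"
    unfolding N_def by (simp only: sum.distrib sum_distrib_left)
  also have "\<dots> = m * (q * (q - 1) * y) + m * (q * (q - 1) * y) + k * C"
    using vandermonde_factorial_moment2[OF k(1), of q q] vandermonde_factorial_moment2'[OF k(1), of q q]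
      vandermonde[of q q k]
    unfolding c_def y_def C_def by (simp add: mult_2)
  finally have sum_N: "(\<Sum>j\<le>k. N j) = m * (q * (q - 1) * y) + m * (q * (q - 1) * y) + k * C" .
  have "k * (k - 1) * C = (2 * q) * (2 * q - 1) * y"
    unfolding C_def y_def using mult_pred_mult_choose[OF k(1), of "2 * q"] by (simp add: mult_2)
  then have "2 * (\<Sum>j\<le>k. N j) \<le> (k * (k - 1) * (m + 1) + k) * C"
    unfolding sum_N by (rule val_bound_step_cleared[OF k(1) refl])
  then have "2 * real (\<Sum>j\<le>k. N j) \<le> (real (k * (k - 1)) * (real m + 1) + real k) * real C"
    by (metis of_nat_le_iff of_nat_add of_nat_mult of_nat_Suc of_nat_numeral add.commute plus_1_eq_Suc)
  then have "real (\<Sum>j\<le>k. N j) / (real q * real C) \<le> val_bound (Suc m) k"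
    using \<open>C > 0\<close> unfolding val_bound_def q_def by (simp add: field_simps)
  moreover have "(\<Sum>j\<le>k. (val_bound m j + val_bound m (k - j)) * (real (c j) / real C))
                   = (\<Sum>j\<le>k. real (N j) / (real q * real C))"
    by (rule sum.cong) (simp_all only: atMost_iff term_eq)
  ultimately show ?thesis
    unfolding c_def C_def by (simp add: sum_divide_distrib)
qed

lemma set_pmf_split_pmf_even:
  assumes "k \<le> 2 * q" "j \<in> set_pmf (split_pmf (2 * q) k)"
  shows "j \<le> k" "j \<le> q" "k - j \<le> q"
  using assms pmf_split_pmf[OF assms(1), of j] by (auto simp: set_pmf_eq split: if_splits)

lemma nn_integral_split_pmf_even:
  assumes "k \<le> 2 * q" "\<And>j. 0 \<le> f j"
  shows "(\<integral>\<^sup>+j. ennreal (f j) \<partial>split_pmf (2 * q) k)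
           = ennreal (\<Sum>j\<le>k. f j * (real ((q choose j) * (q choose (k - j))) / real ((2 * q) choose k)))"
proof -
  have "(\<integral>\<^sup>+j. ennreal (f j) \<partial>split_pmf (2 * q) k) = ennreal (\<Sum>j\<le>k. f j * pmf (split_pmf (2 * q) k) j)"
    using assms set_pmf_split_pmf_even(1)[OF assms(1)]
    by (subst nn_integral_measure_pmf_support[of "{..k}"]) (auto simp: ennreal_mult' simp flip: sum_ennreal)
  also have "(\<Sum>j\<le>k. f j * pmf (split_pmf (2 * q) k) j)
               = (\<Sum>j\<le>k. f j * (real ((q choose j) * (q choose (k - j))) / real ((2 * q) choose k)))"
    using pmf_split_pmf[OF assms(1)] by (intro sum.cong) simp_all
  finally show ?thesis .
qed

lemma nn_integral_val_sample_even_le: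
  assumes "2 \<le> k" "k \<le> 2 * q"
  shows "(\<integral>\<^sup>+F. ennreal (val F) \<partial>sample (2 * q) k)
           \<le> (\<integral>\<^sup>+j. (\<integral>\<^sup>+F. ennreal (val F) \<partial>sample q j) + (\<integral>\<^sup>+F. ennreal (val F) \<partial>sample q (k - j))
                 \<partial>split_pmf (2 * q) k)"
proof -
  have "(\<integral>\<^sup>+F. ennreal (val F) \<partial>sample (2 * q) k)
           = (\<integral>\<^sup>+j. \<integral>\<^sup>+F1. \<integral>\<^sup>+F2. ennreal (val (F1 \<union> shift_sys F2 q))
                  \<partial>sample q (k - j) \<partial>sample q j \<partial>split_pmf (2 * q) k)"
    unfolding sample_split[OF assms] by (simp del: sample.simps)
  also have "\<dots> \<le> (\<integral>\<^sup>+j. (\<integral>\<^sup>+F. ennreal (val F) \<partial>sample q j) + (\<integral>\<^sup>+F. ennreal (val F) \<partial>sample q (k - j))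
                       \<partial>split_pmf (2 * q) k)"
    by (intro nn_integral_mono nn_integral_val_Un_shift_le)
  finally show ?thesis .
qed

lemma nn_integral_val_sample_le:
  "k \<le> 2 ^ m \<Longrightarrow> (\<integral>\<^sup>+F. ennreal (val F) \<partial>sample (2 ^ m) k) \<le> ennreal (val_bound m k)"
proof (induction m arbitrary: k)
  case 0
  then have "k = 0 \<or> k = 1"
    by auto
  then show ?case
    by (auto simp: val_bound_def val_def)
next
  case (Suc m)
  consider "k \<le> 1" | "2 \<le> k"
    by linarith
  then show ?case
  proof cases
    case 1
    then show ?thesis
      by (auto simp: val_bound_def val_def le_Suc_eq)
  next
    case 2
    define q :: nat where "q = 2 ^ m"
    have k: "k \<le> 2 * q"
      using Suc.prems unfolding q_def by simp
    have IH: "(\<integral>\<^sup>+F. ennreal (val F) \<partial>sample q j) + (\<integral>\<^sup>+F. ennreal (val F) \<partial>sample q (k - j))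
                \<le> ennreal (val_bound m j + val_bound m (k - j))"
      if "j \<in> set_pmf (split_pmf (2 * q) k)" for j
      using add_mono[OF Suc.IH Suc.IH] set_pmf_split_pmf_even[OF k that] val_bound_nonneg
      unfolding q_def by (simp add: ennreal_plus del: sample.simps)
    have "(\<integral>\<^sup>+F. ennreal (val F) \<partial>sample (2 * q) k)
            \<le> (\<integral>\<^sup>+j. ennreal (val_bound m j + val_bound m (k - j)) \<partial>split_pmf (2 * q) k)"
      using nn_integral_val_sample_even_le[OF 2 k] IH
      by (blast intro: order.trans nn_integral_mono_AE AE_pmfI)
    also have "\<dots> \<le> ennreal (val_bound (Suc m) k)"
      using val_bound_recursion[OF 2 k[unfolded q_def]] val_bound_nonneg
      by (subst nn_integral_split_pmf_even[OF k]) (simp_all add: add_nonneg_nonneg q_def)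
    finally show ?thesis
      by (simp add: q_def)
  qed
qed

lemma val_bound_le:
  "val_bound m k \<le> real k ^ 2 * (real m + 1) / 2 ^ m"
proof -
  have "real (k * (k - 1)) \<le> real k ^ 2" "real k \<le> real k ^ 2"
    by (cases k; simp add: power2_eq_square algebra_simps)+
  then have "real (k * (k - 1)) * real m + real k \<le> real k ^ 2 * real m + real k ^ 2"
    by (intro add_mono mult_right_mono) auto
  then show ?thesis
    unfolding val_bound_def by (intro divide_right_mono) (simp_all add: algebra_simps)
qed

theorem mainTheorem13:
  fixes t k m :: nat
  assumes "t = 2 ^ m"
    and "k \<le> t"
  shows "val_dist (sample t k) \<le> real k ^ 2 * log 2 (2 * real t) / real t"
proof -
  have "val_dist (sample t k) = enn2real (\<integral>\<^sup>+F. ennreal (val F) \<partial>sample t k)"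
    unfolding val_dist_def by (rule integral_eq_nn_integral) (auto simp: val_nonneg)
  also have "\<dots> \<le> val_bound m k"
    using nn_integral_val_sample_le[of k m] assms val_bound_nonneg
    by (simp add: enn2real_leI)
  also have "\<dots> \<le> real k ^ 2 * (real m + 1) / real t"
    using val_bound_le assms(1) by simp
  also have "real m + 1 = log 2 (2 * real t)"
    using assms(1) by (simp add: log_mult log_nat_power)
  finally show ?thesis .
qed

end
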